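(* Let $\widehat\Psi\in\mathcal P_c(Y)$. There exists an increasing continuous function $R:[0,+\infty)\to[0,+\infty)$ such that for every $T\ge0$, every $k$ and every $t\in[0,T]$, $\Psi^k(t),\ \underline\Psi^k(t),\ \widetilde\Psi^k(t)\in\mathcal P(B^Y_{R(T)})$, where these are the curves of the Markov alternate scheme started at $\widehat\Psi$.
   Context: Markov setting. Fix $n\ge2$, $d\ge1$. $\Lambda_n:=\{\lambda\in\mathbb R^n:\lambda_h>0,\ \sum_h\lambda_h=1\}$, $\overline\Lambda_n$ its closure, identified with $\mathcal P(U)$ for $U:=\{e_1,\dots,e_n\}\subset\mathbb R^n$. $Y:=\mathbb R^d\times\overline\Lambda_n$ with norm $\|(x,\lambda)\|:=|x|+\|\lambda\|_{\mathrm{BL}}$, $\|\mu\|_{\mathrm{BL}}:=\sup\{\sum_h\mu_h\varphi(e_h):\|\varphi\|_\infty+\mathrm{Lip}(\varphi)\le1\}$; $B_R:=\{|x|\le R\}\subset\mathbb R^d$, $B^Y_R:=\{y\in Y:\|y\|\le R\}$. $\mathcal P_1(Y)$, $\mathcal P_c(Y)$, $\mathcal P(K)$: probability measures with finite first moment, compact support, support in $K$; $W_1$ the Kantorovich–Rubinstein distance for $\|\cdot\|$; $m_1(\Psi):=\int\|y\|d\Psi$. A map $\mathcal Q:\mathbb R^d\times\mathcal P_1(Y)\to\mathbb R^{n\times n}$ satisfies (Q0) $\mathcal Q_{h\ell}\ge0$ for $h\ne\ell$, $\mathcal Q_{hh}=-\sum_{\ell\ne h}\mathcal Q_{\ell h}$;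 (Q1) there is a unique $\sigma(x,\Psi)\in\Lambda_n$ with $\mathcal Q_{h\ell}\sigma_\ell=\mathcal Q_{\ell h}\sigma_h$; (Q2) $|\mathcal Q(x_1,\Psi_1)-\mathcal Q(x_2,\Psi_2)|\le L_{\mathcal Q,R}(|x_1-x_2|+W_1(\Psi_1,\Psi_2))$ for $x_i\in B_R$, $\Psi_i\in\mathcal P(B^Y_R)$; (Q3) $|\mathcal Q(x,\Psi)|\le M_{\mathcal Q}(1+|x|+m_1(\Psi))$. Velocity fields $v_\Psi:Y\to\mathbb R^d$ satisfy (v1) $|v_\Psi(y_1)-v_\Psi(y_2)|\le L_{v,R}\|y_1-y_2\|$ for $y_i\in B^Y_R$, $\Psi\in\mathcal P(B^Y_R)$; (v2) $|v_{\Psi_1}(y)-v_{\Psi_2}(y)|\le L_{v,R}W_1(\Psi_1,\Psi_2)$ for $\Psi_i\in\mathcal P(B^Y_R)$, $y\in B^Y_R$; (v3) $|v_\Psi(y)|\le M_v(1+\|y\|+m_1(\Psi))$. $E(x,\lambda,\Psi):=\sum_h\lambda_h\ln(\lambda_h/\sigma_h(x,\Psi))$; $\Phi(a,b):=\frac{a-b}{\ln a-\ln b}$, $\Phi(a,a):=a$; $K(x,\lambda,\Psi):=\sum_{\ell=2}^n\sum_{h<\ell}\mathcal Q_{h\ell}\sigma_\ell\Phi(\lambda_h/\sigma_h,\lambda_\ell/\sigma_\ell)(e_h-e_\ell)\otimes(e_h-e_\ell)$; $G$ its inverse on $\mathbb R^n_0:=\{\sum\xi_h=0\}$; $\mathsf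 d_{(x,\Psi)}(\lambda_1,\lambda_2):=\inf\{\int_0^1\langle G(x,\rho,\Psi)\rho',\rho'\rangle^{1/2}ds:\rho\in C^1([0,1];\Lambda_n),\rho(0)=\lambda_1,\rho(1)=\lambda_2\}$; $E$ and $\mathsf d$ are extended continuously to $\overline\Lambda_n$. Markov alternate scheme. Let $\tau_k>0$, $\tau_k\to0$, $t^k_i:=i\tau_k$ ($i\in\mathbb N$), $\Psi^k_0:=\widehat\Psi$. Given $\Psi^k_i$, for $(x,\lambda)\in Y$ let $\lambda^{\mathrm{new}}(x,\lambda)$ be a minimizer (measurably selected) of $\rho\mapsto E(x,\rho,\Psi^k_i)+\frac1{2\tau_k}\mathsf d^2_{(x,\Psi^k_i)}(\rho,\lambda)$ over $\overline\Lambda_n$; for $t\in[t^k_i,t^k_{i+1}]$: $\Lambda^k_{i+1}(t,x,\lambda):=\lambda+\frac{t-t^k_i}{\tau_k}(\lambda^{\mathrm{new}}(x,\lambda)-\lambda)$; $\widetilde\Psi^k_{i+1}:=$ push-forward of $\Psi^k_i$ under $(x,\lambda)\mapsto(x,\Lambda^k_{i+1}(t^k_{i+1},x,\lambda))$; $X^k_{i+1}(t,x,\lambda):=x+(t-t^k_i)v_{\widetilde\Psi^k_{i+1}}(x,\Lambda^k_{i+1}(t^k_{i+1},x,\lambda))$; $\Psi^k(t):=(X^k_{i+1}(t,\cdot),\Lambda^k_{i+1}(t,\cdot))_\#\Psi^k_i$, $\Psi^k_{i+1}:=\Psi^k(t^k_{i+1})$; $\widetilde\Psi^k(t):=\widetilde\Psi^k_{i+1}$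 on $(t^k_i,t^k_{i+1}]$, $\underline\Psi^k(t):=\Psi^k_i$ on $[t^k_i,t^k_{i+1})$. *)

theory Defs
  imports "HOL-Analysis.Analysis" "HOL-Probability.Probability"
begin

text \<open>Indices h of the simplex range over a finite linearly ordered type 'n (n = CARD('n));
  e_h is axis h 1. The matrix entry Q_{h l} is (Q $ h $ l). Space R^d is real^('d::finite).\<close>

definition open_simplex :: "(real^'n::{finite,linorder}) set" where
  "open_simplex = {l. (\<forall>h. l $ h > 0) \<and> (\<Sum>h\<in>UNIV. l $ h) = 1}"

definition closed_simplex :: "(real^'n::{finite,linorder}) set" where
  "closed_simplex = {l. (\<forall>h. l $ h \<ge> 0) \<and> (\<Sum>h\<in>UNIV. l $ h) = 1}"

definition Uset :: "(real^'n::{finite,linorder}) set" where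
  "Uset = range (\<lambda>h. axis h 1)"

definition sup_U :: "(real^'n::{finite,linorder} \<Rightarrow> real) \<Rightarrow> real" where
  "sup_U \<phi> = Sup {\<bar>\<phi> u\<bar> | u. u \<in> Uset}"

definition lip_U :: "(real^'n::{finite,linorder} \<Rightarrow> real) \<Rightarrow> real" where
  "lip_U \<phi> = Sup {\<bar>\<phi> u - \<phi> w\<bar> / dist u w | u w. u \<in> Uset \<and> w \<in> Uset \<and> u \<noteq> w}"

text \<open>Bounded-Lipschitz norm of a (signed) measure mu on U, identified with a vector of R^n.\<close>
definition bl_norm :: "real^'n::{finite,linorder} \<Rightarrow> real" where
  "bl_norm \<mu> = Sup {(\<Sum>h\<in>UNIV. \<mu> $ h * \<phi> (axis h 1)) | \<phi>. sup_U \<phi> + lip_U \<phi> \<le> 1}"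

definition Yset :: "((real^'d::finite) \<times> (real^'n::{finite,linorder})) set" where
  "Yset = UNIV \<times> closed_simplex"

text \<open>The norm of Y, extended to the ambient vector space R^d x R^n (a norm there as well).\<close>
definition ynorm :: "(real^'d::finite) \<times> (real^'n::{finite,linorder}) \<Rightarrow> real" where
  "ynorm y = norm (fst y) + bl_norm (snd y)"

definition BY :: "real \<Rightarrow> ((real^'d::finite) \<times> (real^'n::{finite,linorder})) set" where
  "BY R = {y \<in> Yset. ynorm y \<le> R}"

type_synonym ('d,'n) ymeasure = "((real^'d) \<times> (real^'n)) measure"

definition PK :: "((real^'d::finite) \<times> (real^'n::{finite,linorder})) set \<Rightarrow> ('d::finite,'n::{finite,linorder}) ymeasure \<Rightarrow> bool" where
  "PK K M \<longleftrightarrow> prob_space M \<and> sets M = sets borel \<and> (AE y in M. y \<in> K)"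

definition P1Y :: "('d::finite,'n::{finite,linorder}) ymeasure \<Rightarrow> bool" where
  "P1Y M \<longleftrightarrow> PK Yset M \<and> integrable M ynorm"

definition PcY :: "('d::finite,'n::{finite,linorder}) ymeasure \<Rightarrow> bool" where
  "PcY M \<longleftrightarrow> (\<exists>K. compact K \<and> K \<subseteq> Yset \<and> PK K M)"

definition m1 :: "('d::finite,'n::{finite,linorder}) ymeasure \<Rightarrow> real" where
  "m1 M = (\<integral>y. ynorm y \<partial>M)"

definition W1 :: "('d::finite,'n::{finite,linorder}) ymeasure \<Rightarrow> ('d::finite,'n::{finite,linorder}) ymeasure \<Rightarrow> real" where
  "W1 M N = Sup {(\<integral>y. f y \<partial>M) - (\<integral>y. f y \<partial>N) | f. \<forall>a b. \<bar>f a - f b\<bar> \<le> ynorm (a - b)}"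

definition detailed_balance :: "real^('n::{finite,linorder})^('n::{finite,linorder}) \<Rightarrow> real^('n::{finite,linorder}) \<Rightarrow> bool" where
  "detailed_balance A s \<longleftrightarrow> (\<forall>h l. A $ h $ l * s $ l = A $ l $ h * s $ h)"

definition Q_assms :: "(real^'d::finite \<Rightarrow> ('d,'n::{finite,linorder}) ymeasure \<Rightarrow> real^('n::{finite,linorder})^('n::{finite,linorder})) \<Rightarrow> bool" where
  "Q_assms Q \<longleftrightarrow>
     \<comment> \<open>(Q0)\<close>
     (\<forall>x \<Psi>. P1Y \<Psi> \<longrightarrow> (\<forall>h l. h \<noteq> l \<longrightarrow> Q x \<Psi> $ h $ l \<ge> 0) \<and>
        (\<forall>h. Q x \<Psi> $ h $ h = - (\<Sum>l\<in>UNIV - {h}. Q x \<Psi> $ l $ h))) \<and>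
     \<comment> \<open>(Q1)\<close>
     (\<forall>x \<Psi>. P1Y \<Psi> \<longrightarrow> (\<exists>!s. s \<in> open_simplex \<and> detailed_balance (Q x \<Psi>) s)) \<and>
     \<comment> \<open>(Q2)\<close>
     (\<exists>L. \<forall>R x1 x2 \<Psi>1 \<Psi>2. x1 \<in> cball 0 R \<longrightarrow> x2 \<in> cball 0 R \<longrightarrow> PK (BY R) \<Psi>1 \<longrightarrow> PK (BY R) \<Psi>2 \<longrightarrow>
        norm (Q x1 \<Psi>1 - Q x2 \<Psi>2) \<le> L R * (dist x1 x2 + W1 \<Psi>1 \<Psi>2)) \<and>
     \<comment> \<open>(Q3)\<close>
     (\<exists>M. \<forall>x \<Psi>. P1Y \<Psi> \<longrightarrow> norm (Q x \<Psi>) \<le> M * (1 + norm x + m1 \<Psi>))"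

definition v_assms :: "(('d::finite,'n::{finite,linorder}) ymeasure \<Rightarrow> (real^('d::finite)) \<times> (real^('n::{finite,linorder})) \<Rightarrow> real^('d::finite)) \<Rightarrow> bool" where
  "v_assms v \<longleftrightarrow>
     (\<exists>L. \<comment> \<open>(v1)\<close>
        (\<forall>R \<Psi> y1 y2. PK (BY R) \<Psi> \<longrightarrow> y1 \<in> BY R \<longrightarrow> y2 \<in> BY R \<longrightarrow>
           norm (v \<Psi> y1 - v \<Psi> y2) \<le> L R * ynorm (y1 - y2)) \<and>
        \<comment> \<open>(v2)\<close>
        (\<forall>R \<Psi>1 \<Psi>2 y. PK (BY R) \<Psi>1 \<longrightarrow> PK (BY R) \<Psi>2 \<longrightarrow> y \<in> BY R \<longrightarrow>
           norm (v \<Psi>1 y - v \<Psi>2 y) \<le> L R * W1 \<Psi>1 \<Psi>2)) \<and>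
     \<comment> \<open>(v3)\<close>
     (\<exists>M. \<forall>\<Psi> y. P1Y \<Psi> \<longrightarrow> y \<in> Yset \<longrightarrow> norm (v \<Psi> y) \<le> M * (1 + ynorm y + m1 \<Psi>))"

definition sigma :: "(real^'d::finite \<Rightarrow> ('d,'n::{finite,linorder}) ymeasure \<Rightarrow> real^('n::{finite,linorder})^('n::{finite,linorder}))
    \<Rightarrow> real^('d::finite) \<Rightarrow> ('d::finite,'n::{finite,linorder}) ymeasure \<Rightarrow> real^('n::{finite,linorder})" where
  "sigma Q x \<Psi> = (THE s. s \<in> open_simplex \<and> detailed_balance (Q x \<Psi>) s)"

text \<open>Relative entropy, with the continuous extension 0 ln 0 = 0 to the closed simplex.\<close>
definition Ent :: "(real^'d::finite \<Rightarrow> ('d,'n::{finite,linorder}) ymeasure \<Rightarrow> real^('n::{finite,linorder})^('n::{finite,linorder}))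
    \<Rightarrow> real^('d::finite) \<Rightarrow> real^('n::{finite,linorder}) \<Rightarrow> ('d::finite,'n::{finite,linorder}) ymeasure \<Rightarrow> real" where
  "Ent Q x l \<Psi> = (\<Sum>h\<in>UNIV. if l $ h = 0 then 0 else l $ h * ln (l $ h / sigma Q x \<Psi> $ h))"

definition logmean :: "real \<Rightarrow> real \<Rightarrow> real" where
  "logmean a b = (if a = b then a else (a - b) / (ln a - ln b))"

definition outer :: "real^'n::{finite,linorder} \<Rightarrow> real^('n::{finite,linorder})^('n::{finite,linorder})" where
  "outer a = (\<chi> i j. a $ i * a $ j)"

definition Kmat :: "(real^'d::finite \<Rightarrow> ('d,'n::{finite,linorder}) ymeasure \<Rightarrow> real^('n::{finite,linorder})^('n::{finite,linorder}))
    \<Rightarrow> real^('d::finite) \<Rightarrow> real^('n::{finite,linorder}) \<Rightarrow> ('d::finite,'n::{finite,linorder}) ymeasure \<Rightarrow> real^('n::{finite,linorder})^('n::{finite,linorder})" where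
  "Kmat Q x l \<Psi> = (\<Sum>ll\<in>UNIV. \<Sum>h\<in>{h. h < ll}.
      (Q x \<Psi> $ h $ ll * sigma Q x \<Psi> $ ll
        * logmean (l $ h / sigma Q x \<Psi> $ h) (l $ ll / sigma Q x \<Psi> $ ll))
      *\<^sub>R outer (axis h 1 - axis ll 1))"

definition Gop :: "(real^'d::finite \<Rightarrow> ('d,'n::{finite,linorder}) ymeasure \<Rightarrow> real^('n::{finite,linorder})^('n::{finite,linorder}))
    \<Rightarrow> real^('d::finite) \<Rightarrow> real^('n::{finite,linorder}) \<Rightarrow> ('d::finite,'n::{finite,linorder}) ymeasure \<Rightarrow> real^('n::{finite,linorder}) \<Rightarrow> real^('n::{finite,linorder})" where
  "Gop Q x l \<Psi> \<xi> = (THE \<eta>. (\<Sum>h\<in>UNIV. \<eta> $ h) = 0 \<and> Kmat Q x l \<Psi> *v \<eta> = \<xi>)"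

definition dist0 :: "(real^'d::finite \<Rightarrow> ('d,'n::{finite,linorder}) ymeasure \<Rightarrow> real^('n::{finite,linorder})^('n::{finite,linorder}))
    \<Rightarrow> real^('d::finite) \<Rightarrow> ('d::finite,'n::{finite,linorder}) ymeasure \<Rightarrow> real^('n::{finite,linorder}) \<Rightarrow> real^('n::{finite,linorder}) \<Rightarrow> real" where
  "dist0 Q x \<Psi> l1 l2 = Inf {integral {0..1} (\<lambda>s. sqrt (Gop Q x (\<rho> s) \<Psi> (D s) \<bullet> D s)) | \<rho> D.
      (\<forall>s\<in>{0..1}. (\<rho> has_vector_derivative D s) (at s within {0..1})) \<and> continuous_on {0..1} D \<and>
      (\<forall>s\<in>{0..1}. \<rho> s \<in> open_simplex) \<and> \<rho> 0 = l1 \<and> \<rho> 1 = l2}"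

definition dist_Q :: "(real^'d::finite \<Rightarrow> ('d,'n::{finite,linorder}) ymeasure \<Rightarrow> real^('n::{finite,linorder})^('n::{finite,linorder}))
    \<Rightarrow> real^('d::finite) \<Rightarrow> ('d::finite,'n::{finite,linorder}) ymeasure \<Rightarrow> real^('n::{finite,linorder}) \<Rightarrow> real^('n::{finite,linorder}) \<Rightarrow> real" where
  "dist_Q Q x \<Psi> l1 l2 =
     Lim (at (l1, l2) within (open_simplex \<times> open_simplex)) (\<lambda>(a, b). dist0 Q x \<Psi> a b)"

text \<open>s is the (measurably selected) minimiser map lambda_new; the maps are written with a
  harmless "if y in Y" guard (all measures are concentrated on Y).\<close>
definition tilde_step :: "((real^'d::finite) \<times> (real^'n::{finite,linorder}) \<Rightarrow> real^('n::{finite,linorder}))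
    \<Rightarrow> ('d::finite,'n::{finite,linorder}) ymeasure \<Rightarrow> ('d::finite,'n::{finite,linorder}) ymeasure" where
  "tilde_step s P = distr P borel (\<lambda>y. if y \<in> Yset then (fst y, s y) else y)"

text \<open>Value at time t = t_i + r of the curve started from P (on [t_i, t_{i+1}]).\<close>
definition flow_step :: "(('d::finite,'n::{finite,linorder}) ymeasure \<Rightarrow> (real^('d::finite)) \<times> (real^('n::{finite,linorder})) \<Rightarrow> real^('d::finite))
    \<Rightarrow> real \<Rightarrow> ((real^('d::finite)) \<times> (real^('n::{finite,linorder})) \<Rightarrow> real^('n::{finite,linorder})) \<Rightarrow> ('d::finite,'n::{finite,linorder}) ymeasure \<Rightarrow> real \<Rightarrow> ('d::finite,'n::{finite,linorder}) ymeasure" where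
  "flow_step v \<tau> s P r = distr P borel (\<lambda>y. if y \<in> Yset then
      (fst y + r *\<^sub>R v (tilde_step s P) (fst y, s y), snd y + (r / \<tau>) *\<^sub>R (s y - snd y)) else y)"

primrec node :: "(('d::finite,'n::{finite,linorder}) ymeasure \<Rightarrow> (real^('d::finite)) \<times> (real^('n::{finite,linorder})) \<Rightarrow> real^('d::finite))
    \<Rightarrow> real \<Rightarrow> (nat \<Rightarrow> (real^('d::finite)) \<times> (real^('n::{finite,linorder})) \<Rightarrow> real^('n::{finite,linorder})) \<Rightarrow> ('d::finite,'n::{finite,linorder}) ymeasure \<Rightarrow> nat \<Rightarrow> ('d::finite,'n::{finite,linorder}) ymeasure" where
  "node v \<tau> s P0 0 = P0"
| "node v \<tau> s P0 (Suc i) = flow_step v \<tau> (s i) (node v \<tau> s P0 i) \<tau>"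

definition scheme_selection :: "(real^'d::finite \<Rightarrow> ('d,'n::{finite,linorder}) ymeasure \<Rightarrow> real^('n::{finite,linorder})^('n::{finite,linorder}))
    \<Rightarrow> (('d::finite,'n::{finite,linorder}) ymeasure \<Rightarrow> (real^('d::finite)) \<times> (real^('n::{finite,linorder})) \<Rightarrow> real^('d::finite))
    \<Rightarrow> real \<Rightarrow> ('d::finite,'n::{finite,linorder}) ymeasure \<Rightarrow> (nat \<Rightarrow> (real^('d::finite)) \<times> (real^('n::{finite,linorder})) \<Rightarrow> real^('n::{finite,linorder})) \<Rightarrow> bool" where
  "scheme_selection Q v \<tau> P0 s \<longleftrightarrow> (\<forall>i.
     s i \<in> borel_measurable borel \<and>
     (\<forall>x l. (x, l) \<in> Yset \<longrightarrow>
        s i (x, l) \<in> closed_simplex \<and>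
        (\<forall>\<rho>\<in>closed_simplex.
           Ent Q x (s i (x, l)) (node v \<tau> s P0 i) + (dist_Q Q x (node v \<tau> s P0 i) (s i (x, l)) l)\<^sup>2 / (2 * \<tau>)
           \<le> Ent Q x \<rho> (node v \<tau> s P0 i) + (dist_Q Q x (node v \<tau> s P0 i) \<rho> l)\<^sup>2 / (2 * \<tau>))))"

definition curve :: "(('d::finite,'n::{finite,linorder}) ymeasure \<Rightarrow> (real^('d::finite)) \<times> (real^('n::{finite,linorder})) \<Rightarrow> real^('d::finite))
    \<Rightarrow> real \<Rightarrow> (nat \<Rightarrow> (real^('d::finite)) \<times> (real^('n::{finite,linorder})) \<Rightarrow> real^('n::{finite,linorder})) \<Rightarrow> ('d::finite,'n::{finite,linorder}) ymeasure \<Rightarrow> real \<Rightarrow> ('d::finite,'n::{finite,linorder}) ymeasure" where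
  "curve v \<tau> s P0 t = (let i = nat \<lfloor>t / \<tau>\<rfloor> in flow_step v \<tau> (s i) (node v \<tau> s P0 i) (t - real i * \<tau>))"

definition curve_under :: "(('d::finite,'n::{finite,linorder}) ymeasure \<Rightarrow> (real^('d::finite)) \<times> (real^('n::{finite,linorder})) \<Rightarrow> real^('d::finite))
    \<Rightarrow> real \<Rightarrow> (nat \<Rightarrow> (real^('d::finite)) \<times> (real^('n::{finite,linorder})) \<Rightarrow> real^('n::{finite,linorder})) \<Rightarrow> ('d::finite,'n::{finite,linorder}) ymeasure \<Rightarrow> real \<Rightarrow> ('d::finite,'n::{finite,linorder}) ymeasure" where
  "curve_under v \<tau> s P0 t = node v \<tau> s P0 (nat \<lfloor>t / \<tau>\<rfloor>)"

text \<open>On (t_i, t_{i+1}] this is tilde Psi_{i+1}; at t = 0 we use the convention tilde Psi(0) = tilde Psi_1.\<close>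
definition curve_tilde :: "(('d::finite,'n::{finite,linorder}) ymeasure \<Rightarrow> (real^('d::finite)) \<times> (real^('n::{finite,linorder})) \<Rightarrow> real^('d::finite))
    \<Rightarrow> real \<Rightarrow> (nat \<Rightarrow> (real^('d::finite)) \<times> (real^('n::{finite,linorder})) \<Rightarrow> real^('n::{finite,linorder})) \<Rightarrow> ('d::finite,'n::{finite,linorder}) ymeasure \<Rightarrow> real \<Rightarrow> ('d::finite,'n::{finite,linorder}) ymeasure" where
  "curve_tilde v \<tau> s P0 t = (let i = nat (\<lceil>t / \<tau>\<rceil> - 1) in tilde_step (s i) (node v \<tau> s P0 i))"

end

theory Submission
  imports Defs
begin

text \<open>Along the scheme the simplex coordinate never leaves the closed simplex (it moves on a
  segment between two of its points), and there the bounded-Lipschitz norm is at most 1. Hence all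
  that has to be controlled is the spatial coordinate. If every measure is concentrated on
  \<open>|x| \<le> \<rho>\<close>, then the growth bound (v3) gives \<open>|v| \<le> M (3 + 2\<rho>)\<close>, so a step of length \<open>r\<close> moves
  the support to \<open>|x| \<le> \<rho> + r M (3 + 2\<rho>)\<close>. This multiplies \<open>\<rho> + 3/2\<close> by \<open>1 + 2Mr \<le> exp (2Mr)\<close>,
  so the discrete Gronwall bound \<open>\<rho>(t) = (\<rho>\<^sub>0 + 3/2) exp (2Mt) - 3/2\<close> holds uniformly in the
  step size; \<open>R(T) = \<rho>(T) + 1\<close> then works.\<close>

type_synonym ('d, 'n) ypoint = "(real^'d) \<times> (real^'n)"

section \<open>The bounded-Lipschitz norm on the simplex\<close>

lemma finite_Uset: "finite (Uset :: (real^'n::{finite,linorder}) set)"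
  unfolding Uset_def by simp

lemma abs_le_sup_U:
  fixes \<phi> :: "real^'n::{finite,linorder} \<Rightarrow> real"
  assumes "u \<in> Uset"
  shows "\<bar>\<phi> u\<bar> \<le> sup_U \<phi>"
  unfolding sup_U_def
  using assms finite_Uset[where 'n='n] by (intro cSup_upper bdd_above_finite) (auto simp: setcompr_eq_image)

lemma Uset_has_two_points:
  assumes "CARD('n) \<ge> 2"
  shows "\<exists>u w. u \<in> (Uset :: (real^'n::{finite,linorder}) set) \<and> w \<in> Uset \<and> u \<noteq> w"
proof -
  obtain a b :: 'n where "a \<noteq> b"
  proof (rule ccontr)
    assume "\<not> thesis"
    with that have "UNIV = {undefined :: 'n}" by blast
    then have "CARD('n) = card {undefined :: 'n}" by (rule arg_cong)
    with assms show False by simp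
  qed
  then show ?thesis by (auto simp: Uset_def axis_eq_axis)
qed

text \<open>\<open>lip_U\<close> is a supremum over pairs of distinct vertices; for \<open>n = 1\<close> it would be \<open>Sup {}\<close>,
  an unspecified real. This is why \<open>CARD('n) \<ge> 2\<close> is assumed throughout.\<close>

lemma lip_U_nonneg:
  fixes \<phi> :: "real^'n::{finite,linorder} \<Rightarrow> real"
  assumes "CARD('n) \<ge> 2"
  shows "0 \<le> lip_U \<phi>"
proof -
  obtain u w :: "real^'n::{finite,linorder}" where uw: "u \<in> Uset" "w \<in> Uset" "u \<noteq> w"
    using Uset_has_two_points[OF assms] by blast
  have "{\<bar>\<phi> u - \<phi> w\<bar> / dist u w | u w. u \<in> Uset \<and> w \<in> Uset \<and> u \<noteq> w}
      = (\<lambda>(u, w). \<bar>\<phi> u - \<phi> w\<bar> / dist u w) ` {(u, w). u \<in> Uset \<and> w \<in> Uset \<and> u \<noteq> w}"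
    by auto
  moreover have "finite {(u, w). u \<in> (Uset :: (real^'n::{finite,linorder}) set) \<and> w \<in> Uset \<and> u \<noteq> w}"
    by (rule finite_subset[of _ "Uset \<times> Uset"]) (auto simp: finite_Uset)
  ultimately have "finite {\<bar>\<phi> u - \<phi> w\<bar> / dist u w | u w. u \<in> Uset \<and> w \<in> Uset \<and> u \<noteq> w}"
    by simp
  then have "\<bar>\<phi> u - \<phi> w\<bar> / dist u w \<le> lip_U \<phi>"
    unfolding lip_U_def using uw by (intro cSup_upper bdd_above_finite) auto
  moreover have "0 \<le> \<bar>\<phi> u - \<phi> w\<bar> / dist u w" by simp
  ultimately show ?thesis by linarith
qed

lemma bl_admissible_zero:
  assumes "CARD('n::{finite,linorder}) \<ge> 2"
  shows "sup_U (\<lambda>_::real^'n::{finite,linorder}. 0::real) + lip_U (\<lambda>_::real^'n::{finite,linorder}. 0) \<le> 1"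
proof -
  obtain u w :: "real^'n::{finite,linorder}" where uw: "u \<in> Uset" "w \<in> Uset" "u \<noteq> w"
    using Uset_has_two_points[OF assms] by blast
  have "sup_U (\<lambda>_::real^'n::{finite,linorder}. 0::real) = Sup {0}"
    unfolding sup_U_def by (rule arg_cong[where f=Sup]) (use uw in auto)
  moreover have "lip_U (\<lambda>_::real^'n::{finite,linorder}. 0::real) = Sup {0}"
    unfolding lip_U_def by (rule arg_cong[where f=Sup]) (use uw in auto)
  ultimately show ?thesis by simp
qed

lemma bl_admissible_abs_le_1:
  fixes \<phi> :: "real^'n::{finite,linorder} \<Rightarrow> real"
  assumes "CARD('n) \<ge> 2" and "sup_U \<phi> + lip_U \<phi> \<le> 1"
  shows "\<bar>\<phi> (axis h 1)\<bar> \<le> 1"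
  using abs_le_sup_U[of "axis h 1" \<phi>] lip_U_nonneg[OF assms(1), of \<phi>] assms(2)
  by (auto simp: Uset_def)

lemma bl_pairing_le_l1_norm:
  fixes \<phi> :: "real^'n::{finite,linorder} \<Rightarrow> real"
  assumes "CARD('n) \<ge> 2" and "sup_U \<phi> + lip_U \<phi> \<le> 1"
  shows "(\<Sum>h\<in>UNIV. \<mu> $ h * \<phi> (axis h 1)) \<le> (\<Sum>h\<in>UNIV. \<bar>\<mu> $ h\<bar>)"
proof (rule sum_mono)
  fix h
  have "\<mu> $ h * \<phi> (axis h 1) \<le> \<bar>\<mu> $ h\<bar> * \<bar>\<phi> (axis h 1)\<bar>"
    by (metis abs_ge_self abs_mult)
  also have "\<dots> \<le> \<bar>\<mu> $ h\<bar>"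
    using bl_admissible_abs_le_1[OF assms] by (simp add: mult_left_le)
  finally show "\<mu> $ h * \<phi> (axis h 1) \<le> \<bar>\<mu> $ h\<bar>" .
qed

lemma bl_pairing_le_bl_norm:
  fixes \<phi> :: "real^'n::{finite,linorder} \<Rightarrow> real"
  assumes "CARD('n) \<ge> 2" and "sup_U \<phi> + lip_U \<phi> \<le> 1"
  shows "(\<Sum>h\<in>UNIV. \<mu> $ h * \<phi> (axis h 1)) \<le> bl_norm \<mu>"
  unfolding bl_norm_def
proof (rule cSup_upper)
  show "bdd_above {\<Sum>h\<in>UNIV. \<mu> $ h * \<phi> (axis h 1) | \<phi>. sup_U \<phi> + lip_U \<phi> \<le> 1}"
    using bl_pairing_le_l1_norm[OF assms(1)] by (intro bdd_aboveI[of _ "\<Sum>h\<in>UNIV. \<bar>\<mu> $ h\<bar>"]) blast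
qed (use assms(2) in blast)

lemma bl_norm_le_l1_norm:
  fixes \<mu> :: "real^'n::{finite,linorder}"
  assumes "CARD('n) \<ge> 2"
  shows "bl_norm \<mu> \<le> (\<Sum>h\<in>UNIV. \<bar>\<mu> $ h\<bar>)"
  unfolding bl_norm_def
  by (rule cSup_least) (use bl_admissible_zero[OF assms] bl_pairing_le_l1_norm[OF assms] in auto)

lemma bl_norm_nonneg:
  fixes \<mu> :: "real^'n::{finite,linorder}"
  assumes "CARD('n) \<ge> 2"
  shows "0 \<le> bl_norm \<mu>"
  using bl_pairing_le_bl_norm[OF assms bl_admissible_zero[OF assms], of \<mu>] by simp

lemma bl_norm_triangle_ineq:
  fixes a b :: "real^'n::{finite,linorder}"
  assumes "CARD('n) \<ge> 2"
  shows "bl_norm (a + b) \<le> bl_norm a + bl_norm b"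
  unfolding bl_norm_def[of "a + b"]
proof (rule cSup_least)
  show "{\<Sum>h\<in>UNIV. (a + b) $ h * \<phi> (axis h 1) | \<phi>. sup_U \<phi> + lip_U \<phi> \<le> 1} \<noteq> {}"
    using bl_admissible_zero[OF assms] by auto
next
  fix z assume "z \<in> {\<Sum>h\<in>UNIV. (a + b) $ h * \<phi> (axis h 1) | \<phi>. sup_U \<phi> + lip_U \<phi> \<le> 1}"
  then obtain \<phi> where z: "z = (\<Sum>h\<in>UNIV. (a + b) $ h * \<phi> (axis h 1))" and \<phi>: "sup_U \<phi> + lip_U \<phi> \<le> 1"
    by blast
  have "z = (\<Sum>h\<in>UNIV. a $ h * \<phi> (axis h 1)) + (\<Sum>h\<in>UNIV. b $ h * \<phi> (axis h 1))"
    unfolding z by (simp add: sum.distrib distrib_right)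
  then show "z \<le> bl_norm a + bl_norm b"
    using bl_pairing_le_bl_norm[OF assms \<phi>, of a] bl_pairing_le_bl_norm[OF assms \<phi>, of b] by linarith
qed

lemma bl_norm_le_norm:
  fixes \<mu> :: "real^'n::{finite,linorder}"
  assumes "CARD('n) \<ge> 2"
  shows "bl_norm \<mu> \<le> CARD('n) * norm \<mu>"
proof -
  have "(\<Sum>h\<in>UNIV. \<bar>\<mu> $ h\<bar>) \<le> (\<Sum>h\<in>(UNIV::'n set). norm \<mu>)"
    by (rule sum_mono) (metis component_le_norm_cart real_norm_def)
  then show ?thesis using bl_norm_le_l1_norm[OF assms, of \<mu>] by simp
qed

lemma lipschitz_on_bl_norm:
  assumes "CARD('n::{finite,linorder}) \<ge> 2"
  shows "CARD('n)-lipschitz_on UNIV (bl_norm :: real^'n::{finite,linorder} \<Rightarrow> real)"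
proof (rule lipschitz_onI)
  fix a b :: "real^'n::{finite,linorder}"
  have "bl_norm a \<le> bl_norm b + bl_norm (a - b)" "bl_norm b \<le> bl_norm a + bl_norm (b - a)"
    using bl_norm_triangle_ineq[OF assms, of b "a - b"] bl_norm_triangle_ineq[OF assms, of a "b - a"]
    by simp_all
  moreover have "bl_norm (a - b) \<le> CARD('n) * dist a b" "bl_norm (b - a) \<le> CARD('n) * dist a b"
    using bl_norm_le_norm[OF assms, of "a - b"] bl_norm_le_norm[OF assms, of "b - a"]
    by (simp_all add: dist_norm norm_minus_commute)
  ultimately show "dist (bl_norm a) (bl_norm b) \<le> CARD('n) * dist a b"
    by (simp add: dist_real_def abs_le_iff)
qed simp

lemma borel_measurable_ynorm:
  assumes "CARD('n::{finite,linorder}) \<ge> 2"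
  shows "(ynorm :: ('d::finite, 'n::{finite,linorder}) ypoint \<Rightarrow> real) \<in> borel_measurable borel"
proof (rule borel_measurable_continuous_onI)
  have "continuous_on UNIV (bl_norm :: real^'n::{finite,linorder} \<Rightarrow> real)"
    by (rule lipschitz_on_continuous_on[OF lipschitz_on_bl_norm[OF assms]])
  then have "continuous_on UNIV (\<lambda>y::('d, 'n) ypoint. bl_norm (snd y))"
    by (rule continuous_on_compose2) (auto intro: continuous_on_snd continuous_on_id)
  then show "continuous_on UNIV (ynorm :: ('d::finite, 'n::{finite,linorder}) ypoint \<Rightarrow> real)"
    unfolding ynorm_def by (intro continuous_on_add continuous_on_norm continuous_on_fst continuous_on_id)
qed

section \<open>The space Y and measures concentrated on strips\<close>

lemma convex_closed_simplex: "convex (closed_simplex :: (real^'n::{finite,linorder}) set)"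
proof (rule convexI)
  fix a b :: "real^'n::{finite,linorder}" and u v :: real
  assume "a \<in> closed_simplex" "b \<in> closed_simplex" "0 \<le> u" "0 \<le> v" "u + v = 1"
  then show "u *\<^sub>R a + v *\<^sub>R b \<in> closed_simplex"
    by (auto simp: closed_simplex_def sum.distrib simp flip: sum_distrib_left)
qed

lemma closed_closed_simplex: "closed (closed_simplex :: (real^'n::{finite,linorder}) set)"
proof -
  have eq: "closed_simplex = (\<Inter>h. {l::real^'n::{finite,linorder}. 0 \<le> l $ h}) \<inter> {l. (\<Sum>h\<in>UNIV. l $ h) = 1}"
    unfolding closed_simplex_def by auto
  show ?thesis
    unfolding eq by (intro closed_Int closed_INT ballI closed_Collect_le closed_Collect_eq continuous_intros)
qed

lemma mem_Yset_iff: "y \<in> Yset \<longleftrightarrow> snd y \<in> closed_simplex"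
  unfolding Yset_def by (cases y) auto

lemma closed_Yset: "closed (Yset :: ('d::finite, 'n::{finite,linorder}) ypoint set)"
  unfolding Yset_def by (intro closed_Times closed_closed_simplex) auto

lemma bl_norm_le_1_on_simplex:
  assumes "CARD('n::{finite,linorder}) \<ge> 2" and "(l :: real^'n::{finite,linorder}) \<in> closed_simplex"
  shows "bl_norm l \<le> 1"
  using bl_norm_le_l1_norm[OF assms(1), of l] assms(2) unfolding closed_simplex_def by simp

lemma ynorm_nonneg:
  fixes y :: "('d::finite, 'n::{finite,linorder}) ypoint"
  assumes "CARD('n) \<ge> 2"
  shows "0 \<le> ynorm y"
  unfolding ynorm_def using bl_norm_nonneg[OF assms, of "snd y"] by simp

lemma ynorm_le_norm_fst_plus_1:
  fixes y :: "('d::finite, 'n::{finite,linorder}) ypoint"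
  assumes "CARD('n) \<ge> 2" and "y \<in> Yset"
  shows "ynorm y \<le> norm (fst y) + 1"
  using bl_norm_le_1_on_simplex[OF assms(1), of "snd y"] assms(2) unfolding ynorm_def mem_Yset_iff by simp

lemma ynorm_le_norm:
  fixes y :: "('d::finite, 'n::{finite,linorder}) ypoint"
  assumes "CARD('n) \<ge> 2"
  shows "ynorm y \<le> (1 + CARD('n)) * norm y"
proof -
  have "norm (snd y) \<le> norm y"
    using norm_snd_le[of "snd y" "fst y"] by simp
  then have "bl_norm (snd y) \<le> CARD('n) * norm y"
    using bl_norm_le_norm[OF assms, of "snd y"] by (meson mult_left_mono of_nat_0_le_iff order_trans)
  then show ?thesis
    using norm_fst_le[of "fst y" "snd y"] unfolding ynorm_def by (simp add: algebra_simps)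
qed

definition Ystrip :: "real \<Rightarrow> ('d::finite, 'n::{finite,linorder}) ypoint set" where
  "Ystrip a = {y \<in> Yset. norm (fst y) \<le> a}"

lemma closed_Ystrip: "closed (Ystrip a :: ('d::finite, 'n::{finite,linorder}) ypoint set)"
proof -
  have eq: "Ystrip a = Yset \<inter> {y :: ('d, 'n) ypoint. norm (fst y) \<le> a}"
    unfolding Ystrip_def by auto
  show ?thesis
    unfolding eq by (intro closed_Int closed_Yset closed_Collect_le continuous_intros)
qed

lemma Ystrip_mono: "a \<le> b \<Longrightarrow> Ystrip a \<subseteq> Ystrip b"
  unfolding Ystrip_def by auto

lemma Ystrip_subset_BY:
  assumes "CARD('n::{finite,linorder}) \<ge> 2"
  shows "(Ystrip a :: ('d::finite, 'n::{finite,linorder}) ypoint set) \<subseteq> BY (a + 1)"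
  unfolding Ystrip_def BY_def using ynorm_le_norm_fst_plus_1[OF assms] by force

lemma PK_mono: "PK K P \<Longrightarrow> K \<subseteq> K' \<Longrightarrow> PK K' P"
  unfolding PK_def by (auto elim: eventually_mono)

lemma PK_distr:
  fixes P :: "('d::finite,'n::{finite,linorder}) ymeasure"
  assumes "PK A P" and f: "f \<in> borel_measurable borel" and "closed B" and "\<And>y. y \<in> A \<Longrightarrow> f y \<in> B"
  shows "PK B (distr P borel f)"
proof -
  interpret prob_space P using assms(1) unfolding PK_def by blast
  have "sets P = sets borel" using assms(1) unfolding PK_def by blast
  then have f_P: "f \<in> borel_measurable P" using f measurable_cong_sets[of P borel] by auto
  have "AE y in P. y \<in> A" using assms(1) unfolding PK_def by blast
  then have "AE y in P. f y \<in> B" by (rule eventually_mono) (rule assms(4))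
  moreover have "{y \<in> space borel. y \<in> B} \<in> sets borel" using assms(3) by simp
  ultimately have "AE y in distr P borel f. y \<in> B" by (subst AE_distr_iff[OF f_P])
  then show ?thesis unfolding PK_def using prob_space_distr[OF f_P] by simp
qed

lemma PK_Ystrip_P1Y:
  fixes P :: "('d::finite,'n::{finite,linorder}) ymeasure"
  assumes n: "CARD('n) \<ge> 2" and P: "PK (Ystrip a) P"
  shows "P1Y P" and "m1 P \<le> a + 1"
proof -
  interpret prob_space P using P unfolding PK_def by blast
  have "sets P = sets borel" using P unfolding PK_def by blast
  then have ynorm_P: "ynorm \<in> borel_measurable P"
    using borel_measurable_ynorm[OF n] measurable_cong_sets[of P borel] by auto
  have strip: "AE y in P. y \<in> Ystrip a" using P unfolding PK_def by blast
  have bound: "AE y in P. norm (ynorm y) \<le> a + 1"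
    using strip
  proof (rule eventually_mono)
    fix y :: "('d, 'n) ypoint" assume "y \<in> Ystrip a"
    then show "norm (ynorm y) \<le> a + 1"
      using ynorm_nonneg[OF n, of y] ynorm_le_norm_fst_plus_1[OF n, of y] by (simp add: Ystrip_def)
  qed
  have int: "integrable P ynorm" by (rule integrable_const_bound[OF bound ynorm_P])
  have "AE y in P. y \<in> Yset" using strip by (rule eventually_mono) (simp add: Ystrip_def)
  with P int show "P1Y P" unfolding P1Y_def PK_def by blast
  have "m1 P \<le> (\<integral>y. (a + 1) \<partial>P)"
    unfolding m1_def by (rule integral_mono_AE[OF int]) (use bound in \<open>auto elim: eventually_mono\<close>)
  then show "m1 P \<le> a + 1" by (simp add: prob_space)
qed

lemma m1_nonneg:
  fixes P :: "('d::finite,'n::{finite,linorder}) ymeasure"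
  assumes "CARD('n) \<ge> 2"
  shows "0 \<le> m1 P"
  unfolding m1_def by (rule integral_nonneg_AE) (simp add: ynorm_nonneg[OF assms])

lemma PcY_imp_PK_Ystrip:
  fixes P :: "('d::finite, 'n::{finite,linorder}) ymeasure"
  assumes "PcY P"
  obtains a where "0 \<le> a" and "PK (Ystrip a) P"
proof -
  obtain K where K: "compact K" "K \<subseteq> Yset" "PK K P" using assms unfolding PcY_def by blast
  obtain b where b: "\<And>y. y \<in> K \<Longrightarrow> norm y \<le> b"
    using compact_imp_bounded[OF K(1)] unfolding bounded_iff by blast
  have "K \<subseteq> Ystrip (max 0 b)"
  proof
    fix y :: "('d, 'n) ypoint" assume y: "y \<in> K"
    have "norm (fst y) \<le> norm y" using norm_fst_le[of "fst y" "snd y"] by simp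
    then show "y \<in> Ystrip (max 0 b)"
      using K(2) b[OF y] y unfolding Ystrip_def by auto
  qed
  with K(3) show thesis by (intro that[of "max 0 b"]) (auto intro: PK_mono)
qed

section \<open>The velocity field\<close>

lemma BY_mono: "R \<le> R' \<Longrightarrow> BY R \<subseteq> BY R'"
  unfolding BY_def by auto

lemma Yset_inter_ball_subset_BY:
  fixes z :: "('d::finite, 'n::{finite,linorder}) ypoint"
  assumes "CARD('n) \<ge> 2"
  shows "Yset \<inter> ball z 1 \<subseteq> BY (norm (fst z) + 2)"
proof
  fix y :: "('d, 'n) ypoint" assume y: "y \<in> Yset \<inter> ball z 1"
  have "norm (fst (y - z)) \<le> norm (y - z)"
    using norm_fst_le[of "fst (y - z)" "snd (y - z)"] unfolding prod.collapse .
  then have "norm (fst y) \<le> norm (fst z) + 1"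
    using y norm_triangle_sub[of "fst y" "fst z"] by (simp add: dist_norm norm_minus_commute)
  then show "y \<in> BY (norm (fst z) + 2)"
    using y ynorm_le_norm_fst_plus_1[OF assms, of y] unfolding BY_def by auto
qed

definition velocity_bound ::
    "real \<Rightarrow> (('d::finite, 'n::{finite,linorder}) ymeasure \<Rightarrow> ('d, 'n) ypoint \<Rightarrow> real^'d::finite) \<Rightarrow> bool" where
  "velocity_bound M v \<longleftrightarrow>
     0 \<le> M \<and> (\<forall>\<Psi> y. P1Y \<Psi> \<longrightarrow> y \<in> Yset \<longrightarrow> norm (v \<Psi> y) \<le> M * (1 + ynorm y + m1 \<Psi>))"

lemma v_assms_velocity_bound:
  fixes v :: "('d::finite, 'n::{finite,linorder}) ymeasure \<Rightarrow> ('d, 'n) ypoint \<Rightarrow> real^'d::finite"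
  assumes n: "CARD('n) \<ge> 2" and v: "v_assms v"
  obtains M where "velocity_bound M v"
proof -
  obtain M0 where M0: "\<And>\<Psi> y. P1Y \<Psi> \<Longrightarrow> y \<in> Yset \<Longrightarrow> norm (v \<Psi> y) \<le> M0 * (1 + ynorm y + m1 \<Psi>)"
    using v unfolding v_assms_def by blast
  have "norm (v \<Psi> y) \<le> max M0 0 * (1 + ynorm y + m1 \<Psi>)" if "P1Y \<Psi>" "y \<in> Yset" for \<Psi> y
  proof -
    have "0 \<le> 1 + ynorm y + m1 \<Psi>"
      using ynorm_nonneg[OF n, of y] m1_nonneg[OF n, of \<Psi>] by linarith
    then show ?thesis using M0[OF that] by (meson max.cobounded1 mult_right_mono order_trans)
  qed
  then show thesis by (intro that[of "max M0 0"]) (simp add: velocity_bound_def)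
qed

lemma continuous_on_BY_velocity:
  fixes v :: "('d::finite, 'n::{finite,linorder}) ymeasure \<Rightarrow> ('d, 'n) ypoint \<Rightarrow> real^'d::finite"
  assumes n: "CARD('n) \<ge> 2" and v: "v_assms v" and \<Psi>: "PK (BY R) \<Psi>"
  shows "continuous_on (BY R) (v \<Psi>)"
proof -
  obtain L where L: "\<And>R \<Psi> y1 y2. PK (BY R) \<Psi> \<Longrightarrow> y1 \<in> BY R \<Longrightarrow> y2 \<in> BY R \<Longrightarrow>
      norm (v \<Psi> y1 - v \<Psi> y2) \<le> L R * ynorm (y1 - y2)"
    using v unfolding v_assms_def by blast
  have "(\<bar>L R\<bar> * (1 + CARD('n)))-lipschitz_on (BY R) (v \<Psi>)"
  proof (rule lipschitz_onI)
    fix y1 y2 :: "('d, 'n) ypoint" assume "y1 \<in> BY R" "y2 \<in> BY R"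
    then have "dist (v \<Psi> y1) (v \<Psi> y2) \<le> L R * ynorm (y1 - y2)"
      using L[OF \<Psi>] by (simp add: dist_norm)
    also have "\<dots> \<le> \<bar>L R\<bar> * ynorm (y1 - y2)"
      using ynorm_nonneg[OF n, of "y1 - y2"] by (simp add: mult_right_mono)
    also have "\<dots> \<le> \<bar>L R\<bar> * ((1 + CARD('n)) * dist y1 y2)"
      using ynorm_le_norm[OF n, of "y1 - y2"] by (simp add: dist_norm mult_left_mono)
    finally show "dist (v \<Psi> y1) (v \<Psi> y2) \<le> \<bar>L R\<bar> * (1 + CARD('n)) * dist y1 y2"
      by (simp add: mult.assoc)
  qed simp
  then show ?thesis by (rule lipschitz_on_continuous_on)
qed

text \<open>Continuity on \<open>Yset\<close> is what makes the flow map measurable; (v1) only gives it on the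
  balls \<open>BY R\<close>, but every point of \<open>Yset\<close> has a relative neighbourhood inside such a ball.\<close>

lemma continuous_on_velocity:
  fixes v :: "('d::finite, 'n::{finite,linorder}) ymeasure \<Rightarrow> ('d, 'n) ypoint \<Rightarrow> real^'d::finite"
  assumes n: "CARD('n) \<ge> 2" and v: "v_assms v" and \<Psi>: "PK (Ystrip a) \<Psi>"
  shows "continuous_on Yset (v \<Psi>)"
  unfolding continuous_on_eq_continuous_within
proof
  fix z :: "('d, 'n) ypoint" assume z: "z \<in> Yset"
  define R where "R = max (a + 1) (norm (fst z) + 2)"
  have "BY (norm (fst z) + 2) \<subseteq> BY R" by (rule BY_mono) (simp add: R_def)
  then have near: "Yset \<inter> ball z 1 \<subseteq> BY R"
    using Yset_inter_ball_subset_BY[OF n, of z] by blast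
  have "BY (a + 1) \<subseteq> BY R" by (rule BY_mono) (simp add: R_def)
  then have "PK (BY R) \<Psi>"
    using PK_mono[OF \<Psi>] Ystrip_subset_BY[OF n] by blast
  then have "continuous_on (BY R) (v \<Psi>)" by (rule continuous_on_BY_velocity[OF n v])
  moreover have "z \<in> BY R" using near z by auto
  ultimately have "continuous (at z within BY R) (v \<Psi>)"
    by (simp add: continuous_on_eq_continuous_within)
  then have "continuous (at z within Yset \<inter> ball z 1) (v \<Psi>)"
    by (rule continuous_within_subset[OF _ near])
  moreover have "at z within Yset \<inter> ball z 1 = at z within Yset"
    by (rule at_within_nhd[of z "ball z 1"]) auto
  ultimately show "continuous (at z within Yset) (v \<Psi>)" by simp
qed

section \<open>One step of the scheme\<close>

definition measurable_simplex_map ::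
    "(('d::finite, 'n::{finite,linorder}) ypoint \<Rightarrow> real^'n::{finite,linorder}) \<Rightarrow> bool" where
  "measurable_simplex_map s \<longleftrightarrow> s \<in> borel_measurable borel \<and> (\<forall>y\<in>Yset. s y \<in> closed_simplex)"

lemma scheme_selection_measurable_simplex_map:
  assumes "scheme_selection Q v \<tau> P0 s"
  shows "measurable_simplex_map (s i)"
proof -
  have "s i y \<in> closed_simplex" if "y \<in> Yset" for y
    using assms that unfolding scheme_selection_def by (cases y) blast
  then show ?thesis using assms unfolding scheme_selection_def measurable_simplex_map_def by blast
qed

lemma borel_measurable_fst_borel: "fst \<in> borel_measurable (borel :: ('a::topological_space \<times> 'b::topological_space) measure)"
  by (rule borel_measurable_continuous_onI) (simp add: continuous_on_fst)

lemma borel_measurable_snd_borel: "snd \<in> borel_measurable (borel :: ('a::topological_space \<times> 'b::topological_space) measure)"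
  by (rule borel_measurable_continuous_onI) (simp add: continuous_on_snd)

lemma borel_measurable_if_Yset:
  fixes f :: "('d::finite, 'n::{finite,linorder}) ypoint \<Rightarrow> ('d, 'n) ypoint"
  assumes "f \<in> borel_measurable borel"
  shows "(\<lambda>y. if y \<in> Yset then f y else y) \<in> borel_measurable borel"
  by (rule measurable_If_set[OF assms measurable_ident_sets[OF refl]]) (simp add: closed_Yset)

lemma tilde_step_in_Ystrip:
  fixes P :: "('d::finite, 'n::{finite,linorder}) ymeasure"
  assumes P: "PK (Ystrip a) P" and s: "measurable_simplex_map s"
  shows "PK (Ystrip a) (tilde_step s P)"
  unfolding tilde_step_def
proof (rule PK_distr[OF P _ closed_Ystrip])
  show "(\<lambda>y. if y \<in> Yset then (fst y, s y) else y) \<in> borel_measurable borel"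
    using s unfolding measurable_simplex_map_def
    by (intro borel_measurable_if_Yset borel_measurable_Pair borel_measurable_fst_borel) auto
  show "(if y \<in> Yset then (fst y, s y) else y) \<in> Ystrip a" if "y \<in> Ystrip a" for y
    using that s by (simp add: Ystrip_def mem_Yset_iff measurable_simplex_map_def)
qed

lemma borel_measurable_flow_map:
  fixes w :: "('d::finite, 'n::{finite,linorder}) ypoint \<Rightarrow> real^'d::finite"
  assumes w: "continuous_on Yset w" and s: "measurable_simplex_map s"
  shows "(\<lambda>y. if y \<in> Yset then (fst y + r *\<^sub>R w (fst y, s y), snd y + c *\<^sub>R (s y - snd y)) else y)
    \<in> borel_measurable borel"
proof -
  have s_meas: "s \<in> borel_measurable borel" using s unfolding measurable_simplex_map_def by blast
  define w0 where "w0 z = (if z \<in> Yset then w z else 0)" for z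
  have "w0 \<in> borel_measurable borel"
    unfolding w0_def using w closed_Yset
    by (intro borel_measurable_continuous_on_if continuous_on_const) (auto intro: borel_closed)
  then have "(\<lambda>y. w0 (fst y, s y)) \<in> borel_measurable borel"
    by (rule measurable_compose[rotated]) (intro borel_measurable_Pair borel_measurable_fst_borel s_meas)
  then have "(\<lambda>y. (fst y + r *\<^sub>R w0 (fst y, s y), snd y + c *\<^sub>R (s y - snd y))) \<in> borel_measurable borel"
    by (intro borel_measurable_Pair borel_measurable_add borel_measurable_scaleR borel_measurable_diff
        borel_measurable_fst_borel borel_measurable_snd_borel s_meas borel_measurable_const)
  then have "(\<lambda>y. if y \<in> Yset then (fst y + r *\<^sub>R w0 (fst y, s y), snd y + c *\<^sub>R (s y - snd y)) else y)
      \<in> borel_measurable borel"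
    by (rule borel_measurable_if_Yset)
  moreover have "(\<lambda>y. if y \<in> Yset then (fst y + r *\<^sub>R w0 (fst y, s y), snd y + c *\<^sub>R (s y - snd y)) else y)
      = (\<lambda>y. if y \<in> Yset then (fst y + r *\<^sub>R w (fst y, s y), snd y + c *\<^sub>R (s y - snd y)) else y)"
    using s by (auto simp: fun_eq_iff w0_def mem_Yset_iff measurable_simplex_map_def)
  ultimately show ?thesis by simp
qed

lemma flow_step_in_Ystrip:
  fixes v :: "('d::finite, 'n::{finite,linorder}) ymeasure \<Rightarrow> ('d, 'n) ypoint \<Rightarrow> real^'d::finite"
    and P :: "('d, 'n) ymeasure"
  assumes n: "CARD('n) \<ge> 2" and v: "v_assms v" and M: "velocity_bound M v"
    and P: "PK (Ystrip a) P" and s: "measurable_simplex_map s"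
    and r: "0 \<le> r" "r \<le> \<tau>"
  shows "PK (Ystrip (a + r * M * (3 + 2 * a))) (flow_step v \<tau> s P r)"
proof -
  let ?T = "tilde_step s P"
  have T: "PK (Ystrip a) ?T" by (rule tilde_step_in_Ystrip[OF P s])
  have T_moment: "P1Y ?T" "m1 ?T \<le> a + 1" by (rule PK_Ystrip_P1Y[OF n T])+
  have c: "0 \<le> r / \<tau>" "r / \<tau> \<le> 1" using r by (auto simp: divide_le_eq_1)
  show ?thesis
    unfolding flow_step_def
  proof (rule PK_distr[OF P borel_measurable_flow_map[OF continuous_on_velocity[OF n v T] s] closed_Ystrip])
    fix y :: "('d, 'n) ypoint" assume y: "y \<in> Ystrip a"
    have y': "(fst y, s y) \<in> Yset" using s y by (simp add: Ystrip_def mem_Yset_iff measurable_simplex_map_def)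
    have "norm (v ?T (fst y, s y)) \<le> M * (1 + ynorm (fst y, s y) + m1 ?T)"
      using M T_moment(1) y' unfolding velocity_bound_def by blast
    also have "\<dots> \<le> M * (3 + 2 * a)"
      using ynorm_le_norm_fst_plus_1[OF n y'] y T_moment(2) M
      by (intro mult_left_mono) (auto simp: Ystrip_def velocity_bound_def)
    finally have "norm (r *\<^sub>R v ?T (fst y, s y)) \<le> r * M * (3 + 2 * a)"
      using r by (simp add: mult_left_mono mult.assoc)
    then have "norm (fst y + r *\<^sub>R v ?T (fst y, s y)) \<le> a + r * M * (3 + 2 * a)"
      using y norm_triangle_ineq[of "fst y" "r *\<^sub>R v ?T (fst y, s y)"] by (auto simp: Ystrip_def)
    moreover have "(1 - r / \<tau>) *\<^sub>R snd y + (r / \<tau>) *\<^sub>R s y \<in> closed_simplex"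
      using y s c by (intro convexD_alt[OF convex_closed_simplex])
        (auto simp: Ystrip_def mem_Yset_iff measurable_simplex_map_def)
    ultimately show "(if y \<in> Yset then (fst y + r *\<^sub>R v ?T (fst y, s y), snd y + (r / \<tau>) *\<^sub>R (s y - snd y)) else y)
        \<in> Ystrip (a + r * M * (3 + 2 * a))"
      using y by (auto simp: Ystrip_def mem_Yset_iff algebra_simps)
  qed
qed

section \<open>Growth of the support along the scheme\<close>

definition strip_radius :: "real \<Rightarrow> real \<Rightarrow> real \<Rightarrow> real" where
  "strip_radius a M t = (a + 3/2) * exp (2 * M * t) - 3/2"

lemma strip_radius_zero [simp]: "strip_radius a M 0 = a"
  unfolding strip_radius_def by simp

lemma strip_radius_mono:
  assumes "0 \<le> a" "0 \<le> M" "t1 \<le> t2"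
  shows "strip_radius a M t1 \<le> strip_radius a M t2"
  unfolding strip_radius_def using assms by (auto intro!: mult_left_mono mult_right_mono)

lemma strip_radius_step:
  assumes "0 \<le> a" "0 \<le> M" "0 \<le> r"
  shows "strip_radius a M t + r * M * (3 + 2 * strip_radius a M t) \<le> strip_radius a M (t + r)"
proof -
  have "strip_radius a M t + r * M * (3 + 2 * strip_radius a M t)
      = (a + 3/2) * exp (2 * M * t) * (1 + 2 * M * r) - 3/2"
    unfolding strip_radius_def by (simp add: algebra_simps)
  also have "\<dots> \<le> (a + 3/2) * exp (2 * M * t) * exp (2 * M * r) - 3/2"
    using assms(1) by (intro diff_right_mono mult_left_mono) auto
  also have "\<dots> = strip_radius a M (t + r)"
    unfolding strip_radius_def by (simp add: algebra_simps flip: exp_add)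
  finally show ?thesis .
qed

lemma floor_step_index:
  assumes "0 < \<tau>" "0 \<le> t"
  shows "real (nat \<lfloor>t / \<tau>\<rfloor>) * \<tau> \<le> t" and "t \<le> real (nat \<lfloor>t / \<tau>\<rfloor>) * \<tau> + \<tau>"
proof -
  have i: "real (nat \<lfloor>t / \<tau>\<rfloor>) = of_int \<lfloor>t / \<tau>\<rfloor>" using assms by simp
  show "real (nat \<lfloor>t / \<tau>\<rfloor>) * \<tau> \<le> t"
    unfolding i using assms by (simp add: pos_le_divide_eq[symmetric])
  have "t / \<tau> \<le> of_int \<lfloor>t / \<tau>\<rfloor> + 1" by linarith
  then show "t \<le> real (nat \<lfloor>t / \<tau>\<rfloor>) * \<tau> + \<tau>"
    unfolding i using assms by (simp add: divide_le_eq algebra_simps)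
qed

lemma ceiling_step_index:
  assumes "0 < \<tau>" "0 \<le> t"
  shows "real (nat (\<lceil>t / \<tau>\<rceil> - 1)) * \<tau> \<le> t"
proof -
  have "real (nat (\<lceil>t / \<tau>\<rceil> - 1)) \<le> t / \<tau>"
  proof (cases "\<lceil>t / \<tau>\<rceil> - 1 \<le> 0")
    case True
    then show ?thesis using assms by simp
  next
    case False
    then have "real (nat (\<lceil>t / \<tau>\<rceil> - 1)) = of_int \<lceil>t / \<tau>\<rceil> - 1" by simp
    with ceiling_correct[of "t / \<tau>"] show ?thesis by linarith
  qed
  then show ?thesis using assms by (simp add: le_divide_eq)
qed

lemma node_in_Ystrip:
  fixes v :: "('d::finite, 'n::{finite,linorder}) ymeasure \<Rightarrow> ('d, 'n) ypoint \<Rightarrow> real^'d::finite"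
    and P0 :: "('d, 'n) ymeasure"
  assumes n: "CARD('n) \<ge> 2" and v: "v_assms v" and M: "velocity_bound M v"
    and a: "0 \<le> a" and P0: "PK (Ystrip a) P0"
    and s: "\<And>i. measurable_simplex_map (s i)" and \<tau>: "0 \<le> \<tau>"
  shows "PK (Ystrip (strip_radius a M (real i * \<tau>))) (node v \<tau> s P0 i)"
proof (induction i)
  case 0
  then show ?case using P0 by simp
next
  case (Suc i)
  let ?\<rho> = "strip_radius a M (real i * \<tau>)"
  have "PK (Ystrip (?\<rho> + \<tau> * M * (3 + 2 * ?\<rho>))) (node v \<tau> s P0 (Suc i))"
    using flow_step_in_Ystrip[OF n v M Suc.IH s \<tau> order_refl] by simp
  moreover have "?\<rho> + \<tau> * M * (3 + 2 * ?\<rho>) \<le> strip_radius a M (real (Suc i) * \<tau>)"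
    using strip_radius_step[OF a _ \<tau>, of M "real i * \<tau>"] M
    by (simp add: velocity_bound_def algebra_simps)
  ultimately show ?case by (rule PK_mono[OF _ Ystrip_mono])
qed

lemma scheme_curves_in_Ystrip:
  fixes v :: "('d::finite, 'n::{finite,linorder}) ymeasure \<Rightarrow> ('d, 'n) ypoint \<Rightarrow> real^'d::finite"
    and P0 :: "('d, 'n) ymeasure"
  assumes n: "CARD('n) \<ge> 2" and v: "v_assms v" and M: "velocity_bound M v"
    and a: "0 \<le> a" and P0: "PK (Ystrip a) P0"
    and s: "\<And>i. measurable_simplex_map (s i)" and \<tau>: "0 < \<tau>" and t: "0 \<le> t"
  shows "PK (Ystrip (strip_radius a M t)) (curve v \<tau> s P0 t)"
    and "PK (Ystrip (strip_radius a M t)) (curve_under v \<tau> s P0 t)"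
    and "PK (Ystrip (strip_radius a M t)) (curve_tilde v \<tau> s P0 t)"
proof -
  note node = node_in_Ystrip[OF n v M a P0 s less_imp_le[OF \<tau>]]
  have M0: "0 \<le> M" using M unfolding velocity_bound_def by blast
  have radius_le: "strip_radius a M (real j * \<tau>) \<le> strip_radius a M t" if "real j * \<tau> \<le> t" for j
    using strip_radius_mono[OF a M0 that] .
  define i where "i = nat \<lfloor>t / \<tau>\<rfloor>"
  have i: "real i * \<tau> \<le> t" "t - real i * \<tau> \<le> \<tau>"
    using floor_step_index[OF \<tau> t] unfolding i_def by auto
  let ?\<rho> = "strip_radius a M (real i * \<tau>)"
  have "PK (Ystrip (?\<rho> + (t - real i * \<tau>) * M * (3 + 2 * ?\<rho>)))
      (flow_step v \<tau> (s i) (node v \<tau> s P0 i) (t - real i * \<tau>))"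
    using i by (intro flow_step_in_Ystrip[OF n v M node s]) auto
  moreover have "?\<rho> + (t - real i * \<tau>) * M * (3 + 2 * ?\<rho>) \<le> strip_radius a M t"
    using strip_radius_step[OF a M0, of "t - real i * \<tau>" "real i * \<tau>"] i by simp
  ultimately show "PK (Ystrip (strip_radius a M t)) (curve v \<tau> s P0 t)"
    unfolding curve_def Let_def i_def[symmetric] by (rule PK_mono[OF _ Ystrip_mono])
  show "PK (Ystrip (strip_radius a M t)) (curve_under v \<tau> s P0 t)"
    unfolding curve_under_def i_def[symmetric] using node radius_le[OF i(1)] by (rule PK_mono[OF _ Ystrip_mono])
  define j where "j = nat (\<lceil>t / \<tau>\<rceil> - 1)"
  have "PK (Ystrip (strip_radius a M (real j * \<tau>))) (tilde_step (s j) (node v \<tau> s P0 j))"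
    by (rule tilde_step_in_Ystrip[OF node s])
  then show "PK (Ystrip (strip_radius a M t)) (curve_tilde v \<tau> s P0 t)"
    unfolding curve_tilde_def Let_def j_def[symmetric]
    using radius_le[OF ceiling_step_index[OF \<tau> t, folded j_def]] by (rule PK_mono[OF _ Ystrip_mono])
qed

theorem lemma5p7:
  fixes Q :: "real^'d::finite \<Rightarrow> ('d,'n::{finite,linorder}) ymeasure \<Rightarrow> real^('n::{finite,linorder})^('n::{finite,linorder})"
    and v :: "('d::finite,'n::{finite,linorder}) ymeasure \<Rightarrow> (real^('d::finite)) \<times> (real^('n::{finite,linorder})) \<Rightarrow> real^('d::finite)"
    and \<tau> :: "nat \<Rightarrow> real"
    and \<Psi>0 :: "('d::finite,'n::{finite,linorder}) ymeasure"
    and sel :: "nat \<Rightarrow> nat \<Rightarrow> (real^('d::finite)) \<times> (real^('n::{finite,linorder})) \<Rightarrow> real^('n::{finite,linorder})"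
  assumes n2: "CARD('n) \<ge> 2"
    and Q: "Q_assms Q"
    and v: "v_assms v"
    and tau_pos: "\<And>k. \<tau> k > 0"
    and tau_lim: "\<tau> \<longlonglongrightarrow> 0"
    and init: "PcY \<Psi>0"
    and scheme: "\<And>k. scheme_selection Q v (\<tau> k) \<Psi>0 (sel k)"
  shows "\<exists>R :: real \<Rightarrow> real. mono_on {0..} R \<and> continuous_on {0..} R \<and> (\<forall>T\<ge>0. R T \<ge> 0) \<and>
    (\<forall>T\<ge>0. \<forall>k. \<forall>t\<in>{0..T}.
        PK (BY (R T)) (curve v (\<tau> k) (sel k) \<Psi>0 t) \<and>
        PK (BY (R T)) (curve_under v (\<tau> k) (sel k) \<Psi>0 t) \<and>
        PK (BY (R T)) (curve_tilde v (\<tau> k) (sel k) \<Psi>0 t))"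
proof -
  obtain a where a: "0 \<le> a" "PK (Ystrip a) \<Psi>0" using PcY_imp_PK_Ystrip[OF init] .
  obtain M where M: "velocity_bound M v" using v_assms_velocity_bound[OF n2 v] .
  then have M0: "0 \<le> M" unfolding velocity_bound_def by blast
  define R where "R T = strip_radius a M T + 1" for T
  have in_ball: "PK (BY (R T)) \<mu>" if "PK (Ystrip (strip_radius a M t)) \<mu>" "t \<le> T"
    for t T and \<mu> :: "('d, 'n) ymeasure"
    using that Ystrip_mono[OF strip_radius_mono[OF a(1) M0 that(2)]] Ystrip_subset_BY[OF n2]
    unfolding R_def by (blast intro: PK_mono)
  show ?thesis
  proof (intro exI[of _ R] conjI allI impI ballI)
    show "mono_on {0..} R" unfolding R_def by (intro mono_onI) (simp add: strip_radius_mono a M0)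
    show "continuous_on {0..} R" unfolding R_def strip_radius_def by (intro continuous_intros)
    show "0 \<le> R T" if "0 \<le> T" for T
      using strip_radius_mono[OF a(1) M0 that] a(1) unfolding R_def by simp
    fix T t :: real and k :: nat assume "t \<in> {0..T}"
    then have t: "0 \<le> t" "t \<le> T" by auto
    note curves = scheme_curves_in_Ystrip[OF n2 v M a
        scheme_selection_measurable_simplex_map[OF scheme[of k]] tau_pos[of k] t(1)]
    show "PK (BY (R T)) (curve v (\<tau> k) (sel k) \<Psi>0 t)" by (rule in_ball[OF curves(1) t(2)])
    show "PK (BY (R T)) (curve_under v (\<tau> k) (sel k) \<Psi>0 t)" by (rule in_ball[OF curves(2) t(2)])
    show "PK (BY (R T)) (curve_tilde v (\<tau> k) (sel k) \<Psi>0 t)" by (rule in_ball[OF curves(3) t(2)])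
  qed
qed

end
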